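(* Let $(\mathbb S,+,\cdot)$ be an S-Ring. Then its Unity is unique and equals $1$; that is, $e=1$ is the unique Unity of $(\mathbb S,+,\cdot)$.
   Context: An S-Structure is a triple $(\mathbb S,+,\cdot)$ where $\mathbb S$ is a set and $+,\cdot$ are binary operations on $\mathbb S$ such that: $(\mathbb S,+)$ is a commutative group with identity $0$ (the inverse of $s$ is written $-s$, and $s-t:=s+(-t)$); $\mathbb S$ is closed under $\cdot$; and there exists $s\in\mathbb S$ with $0\cdot s\neq 0$ or $s\cdot 0\neq 0$. Multiplication binds tighter than addition. The structures considered come with a distinguished element of $\mathbb S$ denoted $1$. It is Commutative if $s\cdot t=t\cdot s$ for all $s,t$. For a Commutative S-Structure and $\alpha\in\mathbb S$, put $\mathbb S_\alpha=\{s\in\mathbb S:0\cdot s=s\cdot 0=\alpha\}$ and $\Lambda=\{\alpha\in\mathbb S:\mathbb S_\alpha\neq\emptyset\}$. Wheel Distributive: $s\cdot(t+r)+(s\cdot 0)=(s\cdot t)+(s\cdot r)$ for all $s,t,r\in\mathbb S$. S-Associative: for all $m,n\in\mathbb S_0$ and $s\in\mathbb S$, $m\cdot(n\cdot s)=(m\cdot n)\cdot s-([(m-1)\cdot(n-1)]\cdot(0\cdot s))$. Base: if $\mathbb S_0\neq\emptyset$ and $\alpha\in\Lambda$, $q\in\mathbb S_\alpha$ is a Base for $\mathbb S_\alpha$ if $q+\beta\in\mathbb S_\alpha$ for all $\beta\in\mathbb S_0$ and every $s\in\mathbb S_\alpha$ equals $q+\beta$ for some $\beta\in\mathbb S_0$.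 Coordinated: $\mathbb S_0\neq\emptyset$ and every $\mathbb S_\alpha$ with $\alpha\in\Lambda$ has a Base. Standard Bases: a Coordinated Commutative S-Structure has Standard Bases if there is a specified element $q_0(1)\in\mathbb S_1$ which is a Base for $\mathbb S_1$, and for every $\alpha\in\Lambda$ the element $q_0(\alpha):=\alpha\cdot(q_0(1)+1)-1$ lies in $\mathbb S_\alpha$ and is a Base for $\mathbb S_\alpha$. An Essential S-Structure is an S-Structure that is Commutative, Wheel Distributive, S-Associative, has Standard Bases (in particular is Coordinated), satisfies $0,1\in\mathbb S_0$, and satisfies $\mathbb S_0=\{1\cdot x:x\in\mathbb S_0\}$. A Unity of a Commutative S-Structure is an element $e\in\Lambda$ with $e\cdot s=s\cdot e=s$ for all $s\in\mathbb S$. An S-Ring is an Essential S-Structure which has a Unity. *)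

theory Defs
  imports Main
begin

definition S_structure ::
  "'a set \<Rightarrow> ('a \<Rightarrow> 'a \<Rightarrow> 'a) \<Rightarrow> ('a \<Rightarrow> 'a \<Rightarrow> 'a) \<Rightarrow> ('a \<Rightarrow> 'a) \<Rightarrow> 'a \<Rightarrow> 'a \<Rightarrow> bool" where
  "S_structure S pl tm ng z u \<longleftrightarrow>
     z \<in> S \<and> u \<in> S \<and>
     (\<forall>s\<in>S. \<forall>t\<in>S. pl s t \<in> S) \<and>
     (\<forall>s\<in>S. \<forall>t\<in>S. \<forall>r\<in>S. pl (pl s t) r = pl s (pl t r)) \<and>
     (\<forall>s\<in>S. \<forall>t\<in>S. pl s t = pl t s) \<and>
     (\<forall>s\<in>S. pl z s = s) \<and>
     (\<forall>s\<in>S. ng s \<in> S \<and> pl s (ng s) = z) \<and>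
     (\<forall>s\<in>S. \<forall>t\<in>S. tm s t \<in> S) \<and>
     (\<exists>s\<in>S. tm z s \<noteq> z \<or> tm s z \<noteq> z)"

definition S_commutative :: "'a set \<Rightarrow> ('a \<Rightarrow> 'a \<Rightarrow> 'a) \<Rightarrow> bool" where
  "S_commutative S tm \<longleftrightarrow> (\<forall>s\<in>S. \<forall>t\<in>S. tm s t = tm t s)"

definition S_alpha :: "'a set \<Rightarrow> ('a \<Rightarrow> 'a \<Rightarrow> 'a) \<Rightarrow> 'a \<Rightarrow> 'a \<Rightarrow> 'a set" where
  "S_alpha S tm z \<alpha> = {s \<in> S. tm z s = \<alpha> \<and> tm s z = \<alpha>}"

definition S_Lambda :: "'a set \<Rightarrow> ('a \<Rightarrow> 'a \<Rightarrow> 'a) \<Rightarrow> 'a \<Rightarrow> 'a set" where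
  "S_Lambda S tm z = {\<alpha> \<in> S. S_alpha S tm z \<alpha> \<noteq> {}}"

definition wheel_distributive ::
  "'a set \<Rightarrow> ('a \<Rightarrow> 'a \<Rightarrow> 'a) \<Rightarrow> ('a \<Rightarrow> 'a \<Rightarrow> 'a) \<Rightarrow> 'a \<Rightarrow> bool" where
  "wheel_distributive S pl tm z \<longleftrightarrow>
     (\<forall>s\<in>S. \<forall>t\<in>S. \<forall>r\<in>S. pl (tm s (pl t r)) (tm s z) = pl (tm s t) (tm s r))"

definition S_associative ::
  "'a set \<Rightarrow> ('a \<Rightarrow> 'a \<Rightarrow> 'a) \<Rightarrow> ('a \<Rightarrow> 'a \<Rightarrow> 'a) \<Rightarrow> ('a \<Rightarrow> 'a) \<Rightarrow> 'a \<Rightarrow> 'a \<Rightarrow> bool" where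
  "S_associative S pl tm ng z u \<longleftrightarrow>
     (\<forall>m\<in>S_alpha S tm z z. \<forall>n\<in>S_alpha S tm z z. \<forall>s\<in>S.
        tm m (tm n s) =
          pl (tm (tm m n) s) (ng (tm (tm (pl m (ng u)) (pl n (ng u))) (tm z s))))"

definition is_base ::
  "'a set \<Rightarrow> ('a \<Rightarrow> 'a \<Rightarrow> 'a) \<Rightarrow> ('a \<Rightarrow> 'a \<Rightarrow> 'a) \<Rightarrow> 'a \<Rightarrow> 'a \<Rightarrow> 'a \<Rightarrow> bool" where
  "is_base S pl tm z \<alpha> q \<longleftrightarrow>
     q \<in> S_alpha S tm z \<alpha> \<and>
     (\<forall>\<beta>\<in>S_alpha S tm z z. pl q \<beta> \<in> S_alpha S tm z \<alpha>) \<and>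
     (\<forall>s\<in>S_alpha S tm z \<alpha>. \<exists>\<beta>\<in>S_alpha S tm z z. s = pl q \<beta>)"

definition coordinated ::
  "'a set \<Rightarrow> ('a \<Rightarrow> 'a \<Rightarrow> 'a) \<Rightarrow> ('a \<Rightarrow> 'a \<Rightarrow> 'a) \<Rightarrow> 'a \<Rightarrow> bool" where
  "coordinated S pl tm z \<longleftrightarrow>
     S_alpha S tm z z \<noteq> {} \<and>
     (\<forall>\<alpha>\<in>S_Lambda S tm z. \<exists>q. is_base S pl tm z \<alpha> q)"

definition standard_bases ::
  "'a set \<Rightarrow> ('a \<Rightarrow> 'a \<Rightarrow> 'a) \<Rightarrow> ('a \<Rightarrow> 'a \<Rightarrow> 'a) \<Rightarrow> ('a \<Rightarrow> 'a) \<Rightarrow> 'a \<Rightarrow> 'a \<Rightarrow> 'a \<Rightarrow> bool" where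
  "standard_bases S pl tm ng z u q1 \<longleftrightarrow>
     coordinated S pl tm z \<and>
     q1 \<in> S_alpha S tm z u \<and> is_base S pl tm z u q1 \<and>
     (\<forall>\<alpha>\<in>S_Lambda S tm z.
        pl (tm \<alpha> (pl q1 u)) (ng u) \<in> S_alpha S tm z \<alpha> \<and>
        is_base S pl tm z \<alpha> (pl (tm \<alpha> (pl q1 u)) (ng u)))"

definition essential_S_structure ::
  "'a set \<Rightarrow> ('a \<Rightarrow> 'a \<Rightarrow> 'a) \<Rightarrow> ('a \<Rightarrow> 'a \<Rightarrow> 'a) \<Rightarrow> ('a \<Rightarrow> 'a) \<Rightarrow> 'a \<Rightarrow> 'a \<Rightarrow> 'a \<Rightarrow> bool" where
  "essential_S_structure S pl tm ng z u q1 \<longleftrightarrow>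
     S_structure S pl tm ng z u \<and>
     S_commutative S tm \<and>
     wheel_distributive S pl tm z \<and>
     S_associative S pl tm ng z u \<and>
     standard_bases S pl tm ng z u q1 \<and>
     z \<in> S_alpha S tm z z \<and> u \<in> S_alpha S tm z z \<and>
     S_alpha S tm z z = {tm u x | x. x \<in> S_alpha S tm z z}"

definition is_unity :: "'a set \<Rightarrow> ('a \<Rightarrow> 'a \<Rightarrow> 'a) \<Rightarrow> 'a \<Rightarrow> 'a \<Rightarrow> bool" where
  "is_unity S tm z e \<longleftrightarrow>
     e \<in> S_Lambda S tm z \<and> (\<forall>s\<in>S. tm e s = s \<and> tm s e = s)"

definition S_ring ::
  "'a set \<Rightarrow> ('a \<Rightarrow> 'a \<Rightarrow> 'a) \<Rightarrow> ('a \<Rightarrow> 'a \<Rightarrow> 'a) \<Rightarrow> ('a \<Rightarrow> 'a) \<Rightarrow> 'a \<Rightarrow> 'a \<Rightarrow> 'a \<Rightarrow> bool" where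
  "S_ring S pl tm ng z u q1 \<longleftrightarrow>
     essential_S_structure S pl tm ng z u q1 \<and> (\<exists>e. is_unity S tm z e)"

end

theory Submission
  imports Defs
begin

text \<open>A Unity \<open>e\<close> lies in \<open>\<Lambda>\<close>, so the standard base \<open>q\<^sub>0(e) = e\<cdot>(q\<^sub>0(1) + 1) - 1\<close> of
  \<open>\<S>\<^sub>e\<close> collapses to \<open>q\<^sub>0(1)\<close>. Thus \<open>q\<^sub>0(1)\<close> lies in both \<open>\<S>\<^sub>e\<close> and \<open>\<S>\<^sub>1\<close>; these sets
  are disjoint for \<open>e \<noteq> 1\<close>, so every Unity equals \<open>1\<close>, and a Unity exists by assumption.\<close>

lemma S_structure_add_neg_cancel_right:
  assumes "S_structure S pl tm ng z u" and "s \<in> S" and "t \<in> S"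
  shows "pl (pl s t) (ng t) = s"
proof -
  from assms(1) have
    assoc: "\<forall>s\<in>S. \<forall>t\<in>S. \<forall>r\<in>S. pl (pl s t) r = pl s (pl t r)" and
    comm: "\<forall>s\<in>S. \<forall>t\<in>S. pl s t = pl t s" and
    zero: "\<forall>s\<in>S. pl z s = s" and
    neg: "\<forall>s\<in>S. ng s \<in> S \<and> pl s (ng s) = z" and
    "z \<in> S"
    unfolding S_structure_def by blast+
  have "pl (pl s t) (ng t) = pl s (pl t (ng t))" using assoc neg assms(2,3) by simp
  also have "\<dots> = pl z s" using neg comm \<open>z \<in> S\<close> assms(2,3) by simp
  also have "\<dots> = s" using zero assms(2) by simp
  finally show ?thesis .
qed

lemma S_alpha_disjoint:
  assumes "s \<in> S_alpha S tm z \<alpha>" and "s \<in> S_alpha S tm z \<beta>"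
  shows "\<alpha> = \<beta>"
  using assms by (simp add: S_alpha_def)

lemma standard_base_of_unity:
  assumes "S_structure S pl tm ng z u" and "standard_bases S pl tm ng z u q1"
    and "is_unity S tm z e"
  shows "q1 \<in> S_alpha S tm z e"
proof -
  have q1: "q1 \<in> S" using assms(2) by (simp add: standard_bases_def S_alpha_def)
  have "u \<in> S" and "pl q1 u \<in> S" using assms(1) q1 by (simp_all add: S_structure_def)
  then have "pl (tm e (pl q1 u)) (ng u) = q1"
    using assms(3) q1 S_structure_add_neg_cancel_right[OF assms(1)] by (simp add: is_unity_def)
  moreover have "pl (tm e (pl q1 u)) (ng u) \<in> S_alpha S tm z e"
    using assms(2,3) by (simp add: standard_bases_def is_unity_def)
  ultimately show ?thesis by simp
qed

lemma S_ring_unity_eq_one: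
  assumes "S_ring S pl tm ng z u q1" and "is_unity S tm z e"
  shows "e = u"
proof -
  have "S_structure S pl tm ng z u" and sb: "standard_bases S pl tm ng z u q1"
    using assms(1) by (simp_all add: S_ring_def essential_S_structure_def)
  then have "q1 \<in> S_alpha S tm z e" using assms(2) by (rule standard_base_of_unity)
  moreover have "q1 \<in> S_alpha S tm z u" using sb by (simp add: standard_bases_def)
  ultimately show ?thesis by (rule S_alpha_disjoint)
qed

theorem proposition3p2p1:
  fixes S :: "'a set" and pl tm :: "'a \<Rightarrow> 'a \<Rightarrow> 'a" and ng :: "'a \<Rightarrow> 'a"
    and z u q1 :: 'a
  assumes "S_ring S pl tm ng z u q1"
  shows "is_unity S tm z u \<and> (\<forall>e. is_unity S tm z e \<longrightarrow> e = u)"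
proof -
  obtain e where "is_unity S tm z e" using assms by (auto simp: S_ring_def)
  moreover have "\<forall>e. is_unity S tm z e \<longrightarrow> e = u"
    using S_ring_unity_eq_one[OF assms] by blast
  ultimately show ?thesis by auto
qed

end
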